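(* Let $(V,v)$ be a pair of upper and lower probabilities on $(\Omega,\mathcal{F})$ and $\theta:\Omega\to\Omega$ a measurable map preserving $V$. (i) $\theta$ is ergodic with respect to $V$ if and only if for every $\theta$-invariant set $B$, $V(B)=0$ or $V(B^c)=0$. (ii) If $\theta$ is ergodic with respect to $V$, then $\theta$ is ergodic with respect to $v$.
   Context: For a nonempty set $\mathcal{P}$ of finitely additive probabilities on $\mathcal{F}$, $V(A)=\sup_{P\in\mathcal{P}}P(A)$, $v(A)=\inf_{P\in\mathcal{P}}P(A)$. $\theta$ preserves a capacity $\mu$ if $\mu(\theta^{-1}A)=\mu(A)$ for all $A\in\mathcal{F}$ (note $\theta$ preserves $V$ iff it preserves $v$). A set $B$ is $\theta$-invariant if $\theta^{-1}B=B$. For a capacity $\mu$ preserved by $\theta$, $\theta$ is ergodic with respect to $\mu$ if for every $\theta$-invariant $B$: $\mu(B)\in\{0,1\}$, and $\mu(B)=0$ or $\mu(B^c)=0$. *)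

theory Defs
  imports "HOL-Analysis.Analysis"
begin

text \<open>A finitely additive probability on the sigma-algebra of a measurable space M
  (only its values on measurable sets matter).\<close>
definition fa_prob :: "'a measure \<Rightarrow> ('a set \<Rightarrow> real) \<Rightarrow> bool" where
  "fa_prob M P \<longleftrightarrow>
     P (space M) = 1 \<and>
     (\<forall>A\<in>sets M. 0 \<le> P A) \<and>
     (\<forall>A\<in>sets M. \<forall>B\<in>sets M. A \<inter> B = {} \<longrightarrow> P (A \<union> B) = P A + P B)"

definition upper_prob :: "('a set \<Rightarrow> real) set \<Rightarrow> 'a set \<Rightarrow> real" where
  "upper_prob \<P> A = (SUP P\<in>\<P>. P A)"

definition lower_prob :: "('a set \<Rightarrow> real) set \<Rightarrow> 'a set \<Rightarrow> real" where
  "lower_prob \<P> A = (INF P\<in>\<P>. P A)"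

definition preimg :: "'a measure \<Rightarrow> ('a \<Rightarrow> 'a) \<Rightarrow> 'a set \<Rightarrow> 'a set" where
  "preimg M \<theta> A = \<theta> -` A \<inter> space M"

definition preserves :: "'a measure \<Rightarrow> ('a \<Rightarrow> 'a) \<Rightarrow> ('a set \<Rightarrow> real) \<Rightarrow> bool" where
  "preserves M \<theta> \<mu> \<longleftrightarrow> (\<forall>A\<in>sets M. \<mu> (preimg M \<theta> A) = \<mu> A)"

definition invariant_set :: "'a measure \<Rightarrow> ('a \<Rightarrow> 'a) \<Rightarrow> 'a set \<Rightarrow> bool" where
  "invariant_set M \<theta> B \<longleftrightarrow> B \<in> sets M \<and> preimg M \<theta> B = B"

definition ergodic :: "'a measure \<Rightarrow> ('a \<Rightarrow> 'a) \<Rightarrow> ('a set \<Rightarrow> real) \<Rightarrow> bool" where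
  "ergodic M \<theta> \<mu> \<longleftrightarrow> preserves M \<theta> \<mu> \<and>
     (\<forall>B. invariant_set M \<theta> B \<longrightarrow>
        (\<mu> B = 0 \<or> \<mu> B = 1) \<and> (\<mu> B = 0 \<or> \<mu> (space M - B) = 0))"

end

theory Submission
  imports Defs
begin

text \<open>Upper and lower probabilities are conjugate, \<open>v A = 1 - V (\<Omega> - A)\<close>, and
  \<open>0 \<le> v \<le> V \<le> 1\<close>. So for an invariant \<open>B\<close> with \<open>V B = 0\<close> or \<open>V (\<Omega> - B) = 0\<close>, the second
  alternative gives \<open>v B = V B = 1\<close>; hence \<open>V B \<in> {0, 1}\<close>, which is (i), and \<open>v\<close> satisfies
  both ergodicity conditions, which together with invariance of \<open>v\<close> (again by conjugacy)
  is (ii).\<close>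

lemma fa_prob_nonneg: "fa_prob M P \<Longrightarrow> A \<in> sets M \<Longrightarrow> 0 \<le> P A"
  unfolding fa_prob_def by blast

lemma fa_prob_compl:
  assumes "fa_prob M P" "A \<in> sets M"
  shows "P (space M - A) = 1 - P A"
proof -
  have "A \<union> (space M - A) = space M"
    using assms(2) sets.sets_into_space by blast
  moreover have "P (A \<union> (space M - A)) = P A + P (space M - A)"
    using assms unfolding fa_prob_def by blast
  ultimately show ?thesis
    using assms(1) unfolding fa_prob_def by simp
qed

lemma fa_prob_le_1:
  assumes "fa_prob M P" "A \<in> sets M"
  shows "P A \<le> 1"
  using fa_prob_compl[OF assms] fa_prob_nonneg[OF assms(1), of "space M - A"] assms(2)
  by auto

lemma preimg_sets: "\<theta> \<in> M \<rightarrow>\<^sub>M M \<Longrightarrow> A \<in> sets M \<Longrightarrow> preimg M \<theta> A \<in> sets M"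
  unfolding preimg_def using measurable_sets by blast

lemma preimg_compl:
  "\<theta> \<in> M \<rightarrow>\<^sub>M M \<Longrightarrow> preimg M \<theta> (space M - A) = space M - preimg M \<theta> A"
  unfolding preimg_def using measurable_space[of \<theta> M M] by auto

locale fa_prob_family =
  fixes M :: "'a measure" and \<P> :: "('a set \<Rightarrow> real) set"
  assumes nonempty: "\<P> \<noteq> {}"
    and fa_prob: "\<And>P. P \<in> \<P> \<Longrightarrow> fa_prob M P"
begin

lemma upper_prob_upper: "A \<in> sets M \<Longrightarrow> P \<in> \<P> \<Longrightarrow> P A \<le> upper_prob \<P> A"
  unfolding upper_prob_def
  by (intro cSUP_upper bdd_aboveI[where M = 1]) (auto intro: fa_prob_le_1 fa_prob)

lemma upper_prob_least: "(\<And>P. P \<in> \<P> \<Longrightarrow> P A \<le> c) \<Longrightarrow> upper_prob \<P> A \<le> c"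
  unfolding upper_prob_def using nonempty by (intro cSUP_least) auto

lemma lower_prob_lower: "A \<in> sets M \<Longrightarrow> P \<in> \<P> \<Longrightarrow> lower_prob \<P> A \<le> P A"
  unfolding lower_prob_def
  by (intro cINF_lower bdd_belowI[where m = 0]) (auto intro: fa_prob_nonneg fa_prob)

lemma lower_prob_greatest: "(\<And>P. P \<in> \<P> \<Longrightarrow> c \<le> P A) \<Longrightarrow> c \<le> lower_prob \<P> A"
  unfolding lower_prob_def using nonempty by (intro cINF_greatest) auto

lemma upper_prob_le_1: "A \<in> sets M \<Longrightarrow> upper_prob \<P> A \<le> 1"
  using fa_prob_le_1[OF fa_prob] by (intro upper_prob_least)

lemma lower_prob_nonneg: "A \<in> sets M \<Longrightarrow> 0 \<le> lower_prob \<P> A"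
  using fa_prob_nonneg[OF fa_prob] by (intro lower_prob_greatest)

lemma lower_prob_le_upper_prob:
  assumes A: "A \<in> sets M"
  shows "lower_prob \<P> A \<le> upper_prob \<P> A"
proof -
  obtain P where P: "P \<in> \<P>"
    using nonempty by blast
  show ?thesis
    using lower_prob_lower[OF A P] upper_prob_upper[OF A P] by linarith
qed

lemma lower_prob_eq_1_minus_upper_prob_compl:
  assumes A: "A \<in> sets M"
  shows "lower_prob \<P> A = 1 - upper_prob \<P> (space M - A)"
proof (rule antisym)
  have "upper_prob \<P> (space M - A) \<le> 1 - lower_prob \<P> A"
  proof (rule upper_prob_least)
    fix P assume P: "P \<in> \<P>"
    show "P (space M - A) \<le> 1 - lower_prob \<P> A"
      using lower_prob_lower[OF A P] fa_prob_compl[OF fa_prob[OF P] A] by linarith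
  qed
  then show "lower_prob \<P> A \<le> 1 - upper_prob \<P> (space M - A)"
    by linarith
  show "1 - upper_prob \<P> (space M - A) \<le> lower_prob \<P> A"
  proof (rule lower_prob_greatest)
    fix P assume P: "P \<in> \<P>"
    have "space M - A \<in> sets M"
      using A by blast
    then show "1 - upper_prob \<P> (space M - A) \<le> P A"
      using upper_prob_upper[OF _ P] fa_prob_compl[OF fa_prob[OF P] A] by fastforce
  qed
qed

lemma lower_prob_eq_0_if_upper_prob_eq_0:
  "A \<in> sets M \<Longrightarrow> upper_prob \<P> A = 0 \<Longrightarrow> lower_prob \<P> A = 0"
  using lower_prob_le_upper_prob[of A] lower_prob_nonneg[of A] by linarith

lemma lower_prob_eq_1_if_upper_prob_compl_eq_0:
  "A \<in> sets M \<Longrightarrow> upper_prob \<P> (space M - A) = 0 \<Longrightarrow> lower_prob \<P> A = 1"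
  by (simp add: lower_prob_eq_1_minus_upper_prob_compl)

lemma upper_prob_eq_1_if_upper_prob_compl_eq_0:
  "A \<in> sets M \<Longrightarrow> upper_prob \<P> (space M - A) = 0 \<Longrightarrow> upper_prob \<P> A = 1"
  using lower_prob_eq_1_if_upper_prob_compl_eq_0[of A] lower_prob_le_upper_prob[of A]
    upper_prob_le_1[of A]
  by linarith

lemma preserves_lower_prob:
  assumes \<theta>: "\<theta> \<in> M \<rightarrow>\<^sub>M M" and "preserves M \<theta> (upper_prob \<P>)"
  shows "preserves M \<theta> (lower_prob \<P>)"
  unfolding preserves_def
proof
  fix A assume A: "A \<in> sets M"
  have "upper_prob \<P> (space M - preimg M \<theta> A) = upper_prob \<P> (space M - A)"
    using assms A unfolding preserves_def preimg_compl[OF \<theta>, symmetric] by blast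
  then show "lower_prob \<P> (preimg M \<theta> A) = lower_prob \<P> A"
    by (simp add: A preimg_sets[OF \<theta> A] lower_prob_eq_1_minus_upper_prob_compl)
qed

lemma ergodic_upper_prob_iff:
  "ergodic M \<theta> (upper_prob \<P>) \<longleftrightarrow> preserves M \<theta> (upper_prob \<P>) \<and>
     (\<forall>B. invariant_set M \<theta> B \<longrightarrow> upper_prob \<P> B = 0 \<or> upper_prob \<P> (space M - B) = 0)"
  using upper_prob_eq_1_if_upper_prob_compl_eq_0 unfolding ergodic_def invariant_set_def
  by meson

lemma ergodic_lower_prob_if_ergodic_upper_prob:
  assumes "\<theta> \<in> M \<rightarrow>\<^sub>M M" and "ergodic M \<theta> (upper_prob \<P>)"
  shows "ergodic M \<theta> (lower_prob \<P>)"
  unfolding ergodic_def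
proof (intro conjI allI impI)
  show "preserves M \<theta> (lower_prob \<P>)"
    using assms preserves_lower_prob unfolding ergodic_def by blast
next
  fix B assume inv: "invariant_set M \<theta> B"
  then have B: "B \<in> sets M" and "space M - B \<in> sets M"
    unfolding invariant_set_def by auto
  moreover have "upper_prob \<P> B = 0 \<or> upper_prob \<P> (space M - B) = 0"
    using assms(2) inv unfolding ergodic_upper_prob_iff by blast
  ultimately have "lower_prob \<P> B = 0 \<or> lower_prob \<P> B = 1 \<and> lower_prob \<P> (space M - B) = 0"
    using lower_prob_eq_0_if_upper_prob_eq_0 lower_prob_eq_1_if_upper_prob_compl_eq_0 by blast
  then show "lower_prob \<P> B = 0 \<or> lower_prob \<P> B = 1"
    and "lower_prob \<P> B = 0 \<or> lower_prob \<P> (space M - B) = 0"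
    by auto
qed

end

theorem proposition6:
  fixes M :: "'a measure" and \<P> :: "('a set \<Rightarrow> real) set" and \<theta> :: "'a \<Rightarrow> 'a"
  assumes "\<P> \<noteq> {}"
    and "\<forall>P\<in>\<P>. fa_prob M P"
    and "\<theta> \<in> M \<rightarrow>\<^sub>M M"
    and "preserves M \<theta> (upper_prob \<P>)"
  shows "(ergodic M \<theta> (upper_prob \<P>) \<longleftrightarrow>
           (\<forall>B. invariant_set M \<theta> B \<longrightarrow>
              upper_prob \<P> B = 0 \<or> upper_prob \<P> (space M - B) = 0))
         \<and> (ergodic M \<theta> (upper_prob \<P>) \<longrightarrow> ergodic M \<theta> (lower_prob \<P>))"
proof -
  interpret fa_prob_family M \<P>
    using assms(1,2) by unfold_locales auto
  show ?thesis
    using ergodic_upper_prob_iff ergodic_lower_prob_if_ergodic_upper_prob assms(3,4) by blast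
qed

end
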